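(* In the changepoint model with negative-binomial segment lengths described in the context (with success probability $q_{old}$), for $0<j\le n$ and every $q\in(0,1)$, $$\sum_{i=n-j}^\infty P(S=i,C_n=j\mid Y_{1:n}=y_{1:n})\big(r\ln q+i\ln(1-q)\big)=\tilde c_{jn}\,r\ln q+\tilde c_{jn}\,\frac{\sum_{\ell=n-j}^\infty\ell\,\mathrm{NB}(\ell;q_{old},r)}{\sum_{\ell=n-j}^\infty\mathrm{NB}(\ell;q_{old},r)}\,\ln(1-q).$$
   Context: Let $\mathrm{NB}(\ell;q,r)=\binom{r-1+\ell}{\ell}q^r(1-q)^\ell$ ($\ell=0,1,2,\dots$) be the negative binomial probability mass function with success probability $q\in(0,1)$ and number of successes $r\in\mathbb N_{\ge1}$. Model (with $q_{old}\in(0,1)$): fix $n\ge1$ and data $y_1,\dots,y_n$; $(\mathbb X,\mathcal X)$, $(\mathbb Y,\mathcal Y)$ standard Borel, $\psi$ $\sigma$-finite on $\mathbb Y$, $\mathcal J$ a probability measure on $\mathbb X$. Let $q_{0i}\in[0,1]$ ($i\ge1$) be arbitrary and for $0<j<i$ let $q_{ji}=\sum_{\ell\ge i-j}\mathrm{NB}(\ell;q_{old},r)/\sum_{\ell\ge i-j-1}\mathrm{NB}(\ell;q_{old},r)$. The changepoint process $(C_i)_{i\ge1}$, $C_i\in\{0,\dots,i\}$, is a Markov chain with $P(C_1=0)=q_{01}$, $P(C_1=1)=1-q_{01}$, and for $i\ge2$: $P(C_i=j\mid C_{i-1}=j)=q_{ji}$, $P(C_i=i\mid C_{i-1}=j)=1-q_{ji}$;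 it is defined for all $i\ge1$. For $i=1,\dots,n$: $X_1\sim\mathcal J$; for $i\ge2$, $X_i\sim\mathcal J$ (fresh) if $C_i=i$ and $X_i=X_{i-1}$ if $C_i<i$; $Y_i$ depends on all other variables only through $X_i$ with density $p(Y_i=y\mid X_i=x)$ w.r.t. $\psi$; given $C_n$, the future chain $(C_k)_{k>n}$ is independent of $X_{1:n},Y_{1:n},C_{1:n-1}$. Assume $\int\prod_{\ell=j}^ip(Y_\ell=y_\ell\mid X_\ell=x)\mathcal J(dx)>0$ for $0<j\le i\le n$. Let $\tau=\min\{k>n:C_k=k\}$ and $S=\tau-1-C_n$. Let $\tilde c_{jn}=P(C_n=j\mid Y_{1:n}=y_{1:n})$. *)

theory Defs
  imports "HOL-Probability.Probability"
begin

definition NB :: "real \<Rightarrow> nat \<Rightarrow> nat \<Rightarrow> real" where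
  "NB q r l = real ((r - 1 + l) choose l) * q ^ r * (1 - q) ^ l"

definition nb_tail :: "real \<Rightarrow> nat \<Rightarrow> nat \<Rightarrow> real" where
  "nb_tail q r m = (\<Sum>l. NB q r (l + m))"

definition qstay :: "(nat \<Rightarrow> real) \<Rightarrow> real \<Rightarrow> nat \<Rightarrow> nat \<Rightarrow> nat \<Rightarrow> real" where
  "qstay q0 qo r j i =
     (if j = 0 then q0 i else nb_tail qo r (i - j) / nb_tail qo r (i - j - 1))"

definition init_prob :: "(nat \<Rightarrow> real) \<Rightarrow> nat \<Rightarrow> real" where
  "init_prob q0 b = (if b = 0 then q0 1 else if b = 1 then 1 - q0 1 else 0)"

text \<open>P(C_i = b | C_{i-1} = a), for i >= 2.\<close>
definition step_prob :: "(nat \<Rightarrow> real) \<Rightarrow> real \<Rightarrow> nat \<Rightarrow> nat \<Rightarrow> nat \<Rightarrow> nat \<Rightarrow> real" where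
  "step_prob q0 qo r i a b =
     (if b = a then qstay q0 qo r a i else if b = i then 1 - qstay q0 qo r a i else 0)"

definition cpaths :: "nat \<Rightarrow> (nat \<Rightarrow> nat) set" where
  "cpaths m = {c \<in> {1..m} \<rightarrow>\<^sub>E {0..m}. \<forall>k\<in>{1..m}. c k \<le> k}"

definition path_prob :: "(nat \<Rightarrow> real) \<Rightarrow> real \<Rightarrow> nat \<Rightarrow> nat \<Rightarrow> (nat \<Rightarrow> nat) \<Rightarrow> real" where
  "path_prob q0 qo r m c =
     (if m = 0 then 1
      else init_prob q0 (c 1) * (\<Prod>i\<in>{2..m}. step_prob q0 qo r i (c (i - 1)) (c i)))"

text \<open>blk c i = the index a <= i at which the latent X_i was freshly drawn
  (X_1 is fresh; X_i is fresh iff C_i = i; otherwise X_i = X_{i-1}).\<close>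
fun blk :: "(nat \<Rightarrow> nat) \<Rightarrow> nat \<Rightarrow> nat" where
  "blk c 0 = 0"
| "blk c (Suc i) = (if i = 0 then 1 else if c (Suc i) = Suc i then Suc i else blk c i)"

text \<open>Density of Y_{1:n} = y_{1:n} (w.r.t. psi^n) given C_{1:n} = c:
  product over fresh draws a of  integral prod_{l in block a} p(y_l | x) J(dx).\<close>
definition lik :: "'x measure \<Rightarrow> ('y \<Rightarrow> 'x \<Rightarrow> real) \<Rightarrow> (nat \<Rightarrow> 'y) \<Rightarrow> nat \<Rightarrow> (nat \<Rightarrow> nat) \<Rightarrow> real" where
  "lik J p y n c =
     (\<Prod>a\<in>{a\<in>{1..n}. blk c a = a}.
        integral\<^sup>L J (\<lambda>x. \<Prod>l\<in>{l\<in>{1..n}. blk c l = a}. p (y l) x))"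

definition evidence :: "(nat \<Rightarrow> real) \<Rightarrow> real \<Rightarrow> nat \<Rightarrow> 'x measure \<Rightarrow> ('y \<Rightarrow> 'x \<Rightarrow> real)
    \<Rightarrow> (nat \<Rightarrow> 'y) \<Rightarrow> nat \<Rightarrow> real" where
  "evidence q0 qo r J p y n = (\<Sum>c\<in>cpaths n. path_prob q0 qo r n c * lik J p y n c)"

text \<open>c~_{jn} = P(C_n = j | Y_{1:n} = y_{1:n}) (Bayes' rule with densities).\<close>
definition post_C :: "(nat \<Rightarrow> real) \<Rightarrow> real \<Rightarrow> nat \<Rightarrow> 'x measure \<Rightarrow> ('y \<Rightarrow> 'x \<Rightarrow> real)
    \<Rightarrow> (nat \<Rightarrow> 'y) \<Rightarrow> nat \<Rightarrow> nat \<Rightarrow> real" where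
  "post_C q0 qo r J p y n j =
     (\<Sum>c\<in>{c\<in>cpaths n. c n = j}. path_prob q0 qo r n c * lik J p y n c)
     / evidence q0 qo r J p y n"

text \<open>P(S = i, C_n = j | Y_{1:n} = y_{1:n}), where tau = min{k > n. C_k = k} and
  S = tau - 1 - C_n.  The event {S = i, C_n = j} is {C_n = j, tau = i + j + 1};
  the future chain depends on the past only through C_n, so the joint density
  is obtained by summing over paths up to time i + j + 1.\<close>
definition post_SC :: "(nat \<Rightarrow> real) \<Rightarrow> real \<Rightarrow> nat \<Rightarrow> 'x measure \<Rightarrow> ('y \<Rightarrow> 'x \<Rightarrow> real)
    \<Rightarrow> (nat \<Rightarrow> 'y) \<Rightarrow> nat \<Rightarrow> nat \<Rightarrow> nat \<Rightarrow> real" where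
  "post_SC q0 qo r J p y n i j =
     (let t = i + j + 1 in
      if t \<le> n then 0 else
      (\<Sum>c\<in>{c\<in>cpaths t. c n = j \<and> c t = t \<and> (\<forall>k\<in>{n<..<t}. c k \<noteq> k)}.
          path_prob q0 qo r t c * lik J p y n c)
      / evidence q0 qo r J p y n)"

end

theory Submission
  imports Defs
begin

(* Given C_n = j, the changepoint chain stays at j until its first renewal tau, surviving
   step k with probability q_jk; the likelihood only sees C_1, ..., C_n, so marginalising the
   paths one step at a time factorises the joint posterior as
     P(S = i, C_n = j | y) = c~_jn * (prod_{n < k < tau} q_jk) * (1 - q_{j tau}).
   The negative binomial hazard ratios q_jk telescope, so this weight is
   c~_jn * NB(i) / sum_{l >= n - j} NB(l): given C_n = j, S is negative binomial truncated to
   [n - j, oo). The identity is then linearity of summation, both series converging because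
   the negative binomial law has a finite mean. The argument only manipulates path weights. *)

lemma negative_binomial_series:
  fixes x :: real
  assumes "\<bar>x\<bar> < 1"
  shows "(\<lambda>l. real ((s + l) choose l) * x ^ l) sums (1 - x) powr - real (Suc s)"
proof -
  have "(- real (Suc s) gchoose l) * (- x) ^ l = real ((s + l) choose l) * x ^ l" for l
  proof -
    have "(- real (Suc s) gchoose l) = (-1) ^ l * (real (s + l) gchoose l)"
      by (subst gbinomial_negated_upper) (simp add: add.commute)
    then show ?thesis
      by (simp add: binomial_gbinomial power_minus[of x])
  qed
  then show ?thesis
    using gen_binomial_real[of "- x" "- real (Suc s)"] assms by simp
qed

lemma NB_pos: "0 < q \<Longrightarrow> q < 1 \<Longrightarrow> 0 < NB q r l"
  unfolding NB_def by (simp add: zero_less_binomial_iff)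

lemma NB_sums_one:
  assumes "0 < q" "q < 1" "r \<ge> 1"
  shows "NB q r sums 1"
proof -
  have "(\<lambda>l. q ^ r * (real ((r - 1 + l) choose l) * (1 - q) ^ l))
      sums (q ^ r * (1 - (1 - q)) powr - real (Suc (r - 1)))"
    using assms by (intro sums_mult negative_binomial_series) auto
  moreover have "q ^ r * q powr - real r = 1"
    using assms by (simp add: powr_minus powr_realpow field_simps)
  ultimately show ?thesis
    using assms unfolding NB_def by (simp add: mult_ac)
qed

lemma NB_mean:
  assumes "0 < q" "q < 1" "r \<ge> 1"
  shows "(\<lambda>l. real l * NB q r l) sums (real r * (1 - q) / q)"
proof -
  have "real (Suc l) * NB q r (Suc l) = real r * (1 - q) / q * NB q (Suc r) l" for l
  proof -
    have "Suc l * ((r + l) choose Suc l) = r * ((r + l) choose l)"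
      using Suc_times_binomial_add[of l "r - 1"] assms by (simp add: add.commute)
    then have binom: "real (Suc l) * real ((r + l) choose Suc l) = real r * real ((r + l) choose l)"
      by (metis of_nat_mult)
    have "real (Suc l) * NB q r (Suc l)
        = (real (Suc l) * real ((r + l) choose Suc l)) * q ^ r * (1 - q) ^ Suc l"
      using assms unfolding NB_def by (simp add: Suc_diff_le)
    also have "\<dots> = real r * (1 - q) / q * (real ((r + l) choose l) * q ^ Suc r * (1 - q) ^ l)"
      unfolding binom using assms by (simp add: field_simps)
    finally show ?thesis
      unfolding NB_def by simp
  qed
  moreover have "(\<lambda>l. real r * (1 - q) / q * NB q (Suc r) l) sums (real r * (1 - q) / q * 1)"
    using assms by (intro sums_mult NB_sums_one) auto
  ultimately show ?thesis
    using sums_Suc[of "\<lambda>l. real l * NB q r l"] by simp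
qed

lemma summable_NB_shift: "0 < q \<Longrightarrow> q < 1 \<Longrightarrow> r \<ge> 1 \<Longrightarrow> summable (\<lambda>l. NB q r (l + s))"
  using NB_sums_one summable_iff_shift sums_summable by blast

lemma nb_tail_pos: "0 < q \<Longrightarrow> q < 1 \<Longrightarrow> r \<ge> 1 \<Longrightarrow> 0 < nb_tail q r s"
  unfolding nb_tail_def by (intro suminf_pos summable_NB_shift NB_pos)

lemma nb_tail_Suc:
  assumes "0 < q" "q < 1" "r \<ge> 1"
  shows "nb_tail q r (Suc s) = nb_tail q r s - NB q r s"
  using suminf_split_head[OF summable_NB_shift[OF assms, of s]] unfolding nb_tail_def by simp

lemma prod_qstay_telescope:
  assumes "0 < q" "q < 1" "r \<ge> 1" "0 < j" "j \<le> n"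
  shows "(\<Prod>i\<in>{n<..n + k}. qstay q0 q r j i) = nb_tail q r (n - j + k) / nb_tail q r (n - j)"
proof -
  define g where "g i = nb_tail q r (i - j)" for i
  have "(\<Prod>i\<in>{n<..n + k}. qstay q0 q r j i) = (\<Prod>i = Suc n..n + k. g i / g (i - 1))"
    using assms(4,5) unfolding g_def qstay_def atLeastSucAtMost_greaterThanAtMost[symmetric]
    by (intro prod.cong) (auto simp: diff_commute)
  also have "\<dots> = g (n + k) / g n"
    using nb_tail_pos[OF assms(1-3)] unfolding g_def
    by (intro prod_telescope'') (auto simp: less_imp_neq[symmetric])
  finally show ?thesis
    using assms(5) unfolding g_def by (simp add: add.commute)
qed

lemma prod_qstay_mult_renewal:
  assumes "0 < q" "q < 1" "r \<ge> 1" "0 < j" "j \<le> n"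
  shows "(\<Prod>i\<in>{n<..n + k}. qstay q0 q r j i) * (1 - qstay q0 q r j (Suc (n + k)))
       = NB q r (k + (n - j)) / nb_tail q r (n - j)"
proof -
  have "{n<..n + Suc k} = insert (Suc (n + k)) {n<..n + k}"
    by auto
  then have "(\<Prod>i\<in>{n<..n + k}. qstay q0 q r j i) * (1 - qstay q0 q r j (Suc (n + k)))
      = (\<Prod>i\<in>{n<..n + k}. qstay q0 q r j i) - (\<Prod>i\<in>{n<..n + Suc k}. qstay q0 q r j i)"
    by (simp add: algebra_simps)
  also have "\<dots> = (nb_tail q r (n - j + k) - nb_tail q r (Suc (n - j + k))) / nb_tail q r (n - j)"
    unfolding prod_qstay_telescope[OF assms] by (simp add: diff_divide_distrib)
  finally show ?thesis
    using nb_tail_Suc[OF assms(1-3)] by (simp add: add.commute)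
qed

lemma cpaths_eq_PiE: "cpaths m = (\<Pi>\<^sub>E k\<in>{1..m}. {0..k})"
  unfolding cpaths_def by (auto simp: PiE_iff extensional_def) (metis atLeastAtMost_iff le_trans)

lemma finite_cpaths: "finite (cpaths m)"
  unfolding cpaths_eq_PiE by (intro finite_PiE) auto

lemma sum_cpaths_Suc:
  "(\<Sum>c\<in>cpaths (Suc m). F c) = (\<Sum>c\<in>cpaths m. \<Sum>b\<in>{0..Suc m}. F (c(Suc m := b)))"
proof -
  have "{1..Suc m} = insert (Suc m) {1..m}"
    by auto
  then have image: "cpaths (Suc m) = (\<lambda>(b, c). c(Suc m := b)) ` ({0..Suc m} \<times> cpaths m)"
    unfolding cpaths_eq_PiE by (simp only: PiE_insert_eq)
  have inj: "inj_on (\<lambda>(b, c). c(Suc m := b)) ({0..Suc m} \<times> cpaths m)"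
    unfolding cpaths_eq_PiE using inj_combinator[of "Suc m" "{1..m}" "\<lambda>k. {0..k}"] by simp
  have "(\<Sum>c\<in>cpaths (Suc m). F c) = (\<Sum>(b, c)\<in>{0..Suc m} \<times> cpaths m. F (c(Suc m := b)))"
    unfolding image sum.reindex[OF inj] by (simp add: case_prod_unfold)
  also have "\<dots> = (\<Sum>c\<in>cpaths m. \<Sum>b\<in>{0..Suc m}. F (c(Suc m := b)))"
    by (simp only: sum.cartesian_product[symmetric] sum.swap[of _ "{0..Suc m}"])
  finally show ?thesis .
qed

lemma path_prob_fun_upd:
  assumes "m \<ge> 1"
  shows "path_prob q0 qo r (Suc m) (c(Suc m := b))
       = path_prob q0 qo r m c * step_prob q0 qo r (Suc m) (c m) b"
proof -
  have "{2..Suc m} = insert (Suc m) {2..m}"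
    using assms by auto
  moreover have "(\<Prod>i\<in>{2..m}. step_prob q0 qo r i ((c(Suc m := b)) (i - 1)) ((c(Suc m := b)) i))
      = (\<Prod>i\<in>{2..m}. step_prob q0 qo r i (c (i - 1)) (c i))"
    by (intro prod.cong) auto
  ultimately show ?thesis
    using assms unfolding path_prob_def by simp
qed

lemma sum_step_prob:
  assumes "a < i"
  shows "(\<Sum>b\<in>{0..i}. step_prob q0 qo r i a b * f b)
       = qstay q0 qo r a i * f a + (1 - qstay q0 qo r a i) * f i"
proof -
  have "step_prob q0 qo r i a b * f b = (if b = a then qstay q0 qo r a i * f a else 0)
      + (if b = i then (1 - qstay q0 qo r a i) * f i else 0)" for b
    using assms unfolding step_prob_def by auto
  then show ?thesis
    using assms by (simp add: sum.distrib)
qed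

lemma blk_cong: "(\<And>i. 1 \<le> i \<Longrightarrow> i \<le> a \<Longrightarrow> c i = c' i) \<Longrightarrow> blk c a = blk c' a"
  by (induction a) auto

lemma lik_cong:
  assumes "\<And>i. 1 \<le> i \<Longrightarrow> i \<le> n \<Longrightarrow> c i = c' i"
  shows "lik J p y n c = lik J p y n c'"
proof -
  have "\<And>a. a \<in> {1..n} \<Longrightarrow> blk c a = blk c' a"
    using assms by (intro blk_cong) auto
  then have "{a\<in>{1..n}. blk c a = a} = {a\<in>{1..n}. blk c' a = a}"
    "\<And>a. {l\<in>{1..n}. blk c l = a} = {l\<in>{1..n}. blk c' l = a}"
    by auto
  then show ?thesis
    unfolding lik_def by simp
qed

lemma path_prob_nonzero_stay_or_renew:
  assumes "path_prob q0 qo r t c \<noteq> 0" "2 \<le> k" "k \<le> t"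
  shows "c k = c (k - 1) \<or> c k = k"
proof -
  have "step_prob q0 qo r k (c (k - 1)) (c k) \<noteq> 0"
    using assms unfolding path_prob_def by (auto split: if_splits)
  then show ?thesis
    unfolding step_prob_def by (auto split: if_splits)
qed

lemma path_prob_nonzero_no_renewal:
  assumes "path_prob q0 qo r t c \<noteq> 0" "1 \<le> n" "n \<le> k" "k \<le> t"
    and "\<forall>i\<in>{n<..k}. c i \<noteq> i"
  shows "c k = c n"
  using assms(3-5)
proof (induction k rule: dec_induct)
  case (step k)
  then have "c (Suc k) = c k"
    using path_prob_nonzero_stay_or_renew[OF assms(1), of "Suc k"] assms(2) by auto
  then show ?case
    using step by auto
qed simp

definition stay_weight :: "(nat \<Rightarrow> real) \<Rightarrow> real \<Rightarrow> nat \<Rightarrow> 'x measure \<Rightarrow> ('y \<Rightarrow> 'x \<Rightarrow> real)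
    \<Rightarrow> (nat \<Rightarrow> 'y) \<Rightarrow> nat \<Rightarrow> nat \<Rightarrow> nat \<Rightarrow> real" where
  "stay_weight q0 qo r J p y n j t =
     (\<Sum>c\<in>cpaths t. if c n = j \<and> (\<forall>k\<in>{n<..t}. c k \<noteq> k)
        then path_prob q0 qo r t c * lik J p y n c else 0)"

lemma sum_no_renewal_paths_Suc:
  assumes "1 \<le> n" "n \<le> t"
  shows "(\<Sum>c\<in>cpaths (Suc t). if c n = j \<and> (\<forall>k\<in>{n<..t}. c k \<noteq> k)
            then path_prob q0 qo r (Suc t) c * lik J p y n c * f (c (Suc t)) else 0)
       = stay_weight q0 qo r J p y n j t
         * (qstay q0 qo r j (Suc t) * f j + (1 - qstay q0 qo r j (Suc t)) * f (Suc t))"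
proof -
  define W where "W c = (if c n = j \<and> (\<forall>k\<in>{n<..t}. c k \<noteq> k)
    then path_prob q0 qo r t c * lik J p y n c else 0)" for c
  define K where
    "K a = qstay q0 qo r a (Suc t) * f a + (1 - qstay q0 qo r a (Suc t)) * f (Suc t)" for a
  have extend: "(\<Sum>b\<in>{0..Suc t}.
        if (c(Suc t := b)) n = j \<and> (\<forall>k\<in>{n<..t}. (c(Suc t := b)) k \<noteq> k)
        then path_prob q0 qo r (Suc t) (c(Suc t := b)) * lik J p y n (c(Suc t := b))
          * f ((c(Suc t := b)) (Suc t)) else 0)
      = W c * K (c t)" if "c \<in> cpaths t" for c
  proof -
    have lik: "lik J p y n (c(Suc t := b)) = lik J p y n c" for b
      using assms by (intro lik_cong) auto
    have summand: "(if (c(Suc t := b)) n = j \<and> (\<forall>k\<in>{n<..t}. (c(Suc t := b)) k \<noteq> k)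
        then path_prob q0 qo r (Suc t) (c(Suc t := b)) * lik J p y n (c(Suc t := b))
          * f ((c(Suc t := b)) (Suc t)) else 0)
      = W c * (step_prob q0 qo r (Suc t) (c t) b * f b)" for b
      using assms unfolding W_def lik by (simp add: path_prob_fun_upd)
    have "c t < Suc t"
      using that assms unfolding cpaths_def by (simp add: le_imp_less_Suc)
    then show ?thesis
      unfolding summand sum_distrib_left[symmetric] K_def by (simp only: sum_step_prob)
  qed
  \<comment> \<open>without renewal in \<open>(n, t]\<close> the chain is still in state \<open>j\<close> at time \<open>t\<close>\<close>
  have settle: "W c * K (c t) = W c * K j" for c
  proof (cases "W c = 0")
    case False
    then have "path_prob q0 qo r t c \<noteq> 0" "c n = j" "\<forall>k\<in>{n<..t}. c k \<noteq> k"
      unfolding W_def by (auto split: if_splits)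
    with assms have "c t = j"
      using path_prob_nonzero_no_renewal by fastforce
    then show ?thesis
      by simp
  qed simp
  have "(\<Sum>c\<in>cpaths (Suc t). if c n = j \<and> (\<forall>k\<in>{n<..t}. c k \<noteq> k)
            then path_prob q0 qo r (Suc t) c * lik J p y n c * f (c (Suc t)) else 0)
      = (\<Sum>c\<in>cpaths t. W c * K (c t))"
    unfolding sum_cpaths_Suc using extend by (rule sum.cong[OF refl])
  also have "\<dots> = stay_weight q0 qo r J p y n j t * K j"
    unfolding settle by (simp add: stay_weight_def W_def sum_distrib_right)
  finally show ?thesis
    unfolding K_def .
qed

lemma stay_weight_Suc:
  assumes "1 \<le> n" "n \<le> t" "j \<le> n"
  shows "stay_weight q0 qo r J p y n j (Suc t)
       = stay_weight q0 qo r J p y n j t * qstay q0 qo r j (Suc t)"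
proof -
  have "{n<..Suc t} = insert (Suc t) {n<..t}"
    using assms by auto
  then have "stay_weight q0 qo r J p y n j (Suc t)
      = (\<Sum>c\<in>cpaths (Suc t). if c n = j \<and> (\<forall>k\<in>{n<..t}. c k \<noteq> k)
          then path_prob q0 qo r (Suc t) c * lik J p y n c * (if c (Suc t) = Suc t then 0 else 1)
          else 0)"
    unfolding stay_weight_def by (intro sum.cong) auto
  also have "\<dots> = stay_weight q0 qo r J p y n j t * qstay q0 qo r j (Suc t)"
    using assms sum_no_renewal_paths_Suc[where t = t and j = j and f = "\<lambda>b. if b = Suc t then 0 else 1"]
    by simp
  finally show ?thesis .
qed

lemma stay_weight_add:
  assumes "1 \<le> n" "j \<le> n"
  shows "stay_weight q0 qo r J p y n j (n + k)
       = stay_weight q0 qo r J p y n j n * (\<Prod>i\<in>{n<..n + k}. qstay q0 qo r j i)"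
proof (induction k)
  case (Suc k)
  have "{n<..n + Suc k} = insert (Suc (n + k)) {n<..n + k}"
    by auto
  then show ?case
    using Suc assms by (simp add: stay_weight_Suc)
qed simp

lemma stay_weight_self:
  "stay_weight q0 qo r J p y n j n
     = (\<Sum>c\<in>{c\<in>cpaths n. c n = j}. path_prob q0 qo r n c * lik J p y n c)"
  unfolding stay_weight_def by (simp add: sum.inter_filter[OF finite_cpaths])

lemma first_renewal_weight:
  assumes "1 \<le> n" "n \<le> t" "j \<le> n"
  shows "(\<Sum>c\<in>{c\<in>cpaths (Suc t).
              c n = j \<and> c (Suc t) = Suc t \<and> (\<forall>k\<in>{n<..<Suc t}. c k \<noteq> k)}.
            path_prob q0 qo r (Suc t) c * lik J p y n c)
       = stay_weight q0 qo r J p y n j t * (1 - qstay q0 qo r j (Suc t))"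
proof -
  have "{n<..<Suc t} = {n<..t}"
    by auto
  then have "(\<Sum>c\<in>{c\<in>cpaths (Suc t).
              c n = j \<and> c (Suc t) = Suc t \<and> (\<forall>k\<in>{n<..<Suc t}. c k \<noteq> k)}.
            path_prob q0 qo r (Suc t) c * lik J p y n c)
      = (\<Sum>c\<in>cpaths (Suc t). if c n = j \<and> (\<forall>k\<in>{n<..t}. c k \<noteq> k)
          then path_prob q0 qo r (Suc t) c * lik J p y n c * (if c (Suc t) = Suc t then 1 else 0)
          else 0)"
    unfolding sum.inter_filter[OF finite_cpaths] by (intro sum.cong) auto
  also have "\<dots> = stay_weight q0 qo r J p y n j t * (1 - qstay q0 qo r j (Suc t))"
    using assms sum_no_renewal_paths_Suc[where t = t and j = j and f = "\<lambda>b. if b = Suc t then 1 else 0"]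
    by simp
  finally show ?thesis .
qed

lemma post_SC_eq_post_C_mult_NB:
  assumes "0 < qo" "qo < 1" "r \<ge> 1" "0 < j" "j \<le> n"
  shows "post_SC q0 qo r J p y n (k + (n - j)) j
       = post_C q0 qo r J p y n j * (NB qo r (k + (n - j)) / nb_tail qo r (n - j))"
proof -
  have "k + (n - j) + j + 1 = Suc (n + k)"
    using assms by simp
  then have "post_SC q0 qo r J p y n (k + (n - j)) j
      = stay_weight q0 qo r J p y n j (n + k) * (1 - qstay q0 qo r j (Suc (n + k)))
        / evidence q0 qo r J p y n"
    using assms unfolding post_SC_def Let_def by (simp add: first_renewal_weight add.commute)
  also have "\<dots> = stay_weight q0 qo r J p y n j n / evidence q0 qo r J p y n
      * ((\<Prod>i\<in>{n<..n + k}. qstay q0 qo r j i) * (1 - qstay q0 qo r j (Suc (n + k))))"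
    using assms by (simp add: stay_weight_add)
  finally show ?thesis
    unfolding post_C_def stay_weight_self prod_qstay_mult_renewal[OF assms] .
qed

theorem mainTheorem15:
  fixes qold :: real and r n j :: nat and q0 :: "nat \<Rightarrow> real"
    and J :: "'x measure" and \<psi> :: "'y measure" and p :: "'y \<Rightarrow> 'x \<Rightarrow> real"
    and y :: "nat \<Rightarrow> 'y" and q :: real
  assumes qold: "0 < qold" "qold < 1"
    and r: "r \<ge> 1"
    and n: "n \<ge> 1"
    and q0: "\<And>i. i \<ge> 1 \<Longrightarrow> 0 \<le> q0 i \<and> q0 i \<le> 1"
    and J: "prob_space J"
    and psi: "sigma_finite_measure \<psi>"
    and p_meas: "(\<lambda>(u, x). p u x) \<in> borel_measurable (\<psi> \<Otimes>\<^sub>M J)"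
    and p_nonneg: "\<And>u x. 0 \<le> p u x"
    and p_dens: "\<And>x. x \<in> space J \<Longrightarrow> (\<integral>\<^sup>+ u. ennreal (p u x) \<partial>\<psi>) = 1"
    and y: "\<And>l. l \<in> {1..n} \<Longrightarrow> y l \<in> space \<psi>"
    and pos: "\<And>a b. 0 < a \<Longrightarrow> a \<le> b \<Longrightarrow> b \<le> n \<Longrightarrow>
                 integral\<^sup>L J (\<lambda>x. \<Prod>l\<in>{a..b}. p (y l) x) > 0"
    and j: "0 < j" "j \<le> n"
    and q: "0 < q" "q < 1"
  shows "(\<lambda>k. post_SC q0 qold r J p y n (k + (n - j)) j
               * (real r * ln q + real (k + (n - j)) * ln (1 - q)))
         sums (post_C q0 qold r J p y n j * real r * ln q
               + post_C q0 qold r J p y n j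
                 * ((\<Sum>l. real (l + (n - j)) * NB qold r (l + (n - j))) / nb_tail qold r (n - j))
                 * ln (1 - q))"
proof -
  define m where "m = n - j"
  define A where "A = post_C q0 qold r J p y n j / nb_tail qold r m"
  have "(\<lambda>k. NB qold r (k + m)) sums nb_tail qold r m"
    unfolding nb_tail_def using summable_NB_shift[OF qold r] by (rule summable_sums)
  moreover have "(\<lambda>k. real (k + m) * NB qold r (k + m)) sums (\<Sum>l. real (l + m) * NB qold r (l + m))"
    using NB_mean[OF qold r] summable_iff_shift[of "\<lambda>l. real l * NB qold r l" m]
    by (simp add: sums_iff)
  ultimately have series: "(\<lambda>k. A * (real r * ln q * NB qold r (k + m)
        + ln (1 - q) * (real (k + m) * NB qold r (k + m))))
      sums (A * (real r * ln q * nb_tail qold r m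
        + ln (1 - q) * (\<Sum>l. real (l + m) * NB qold r (l + m))))"
    by (intro sums_mult sums_add) auto
  have "post_SC q0 qold r J p y n (k + m) j * (real r * ln q + real (k + m) * ln (1 - q))
      = A * (real r * ln q * NB qold r (k + m) + ln (1 - q) * (real (k + m) * NB qold r (k + m)))" for k
    unfolding m_def A_def post_SC_eq_post_C_mult_NB[OF qold r j]
    by (simp add: algebra_simps add_divide_distrib)
  moreover have "post_C q0 qold r J p y n j * real r * ln q
      + post_C q0 qold r J p y n j * ((\<Sum>l. real (l + m) * NB qold r (l + m)) / nb_tail qold r m)
        * ln (1 - q)
      = A * (real r * ln q * nb_tail qold r m + ln (1 - q) * (\<Sum>l. real (l + m) * NB qold r (l + m)))"
    using nb_tail_pos[OF qold r, of m] unfolding A_def by (simp add: field_simps)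
  ultimately show ?thesis
    using series unfolding m_def by simp
qed

end
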